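(* Assume that $A$ is compatible. Let $f,g\in\mathcal{S}(\Omega)$. If $x\in\Omega$ is real and $x\in V(f)\cup V(g)$, then $x\in V(f\cdot g)$. More generally: (1) If $\mathbb{S}_x\subseteq V(f)$ or $\mathbb{S}_x\subseteq V(g)$, then $\mathbb{S}_x\subseteq V(f\cdot g)$. If $x\in\Omega\setminus\mathbb{R}$ and $f'_s(x)$, $g'_s(x)$ and $(f\cdot g)'_s(x)$ belong to $C_A$, then: (2) If $\mathbb{S}_x\cap V(f)$ is a singleton $\{y\}$ and $\mathbb{S}_x\cap V(g)=\emptyset$, then $\mathbb{S}_x\cap V(f\cdot g)\subseteq\{w\}$, with \[w=\big((yf'_s(x))g^\circ_s(x)-(y\,\mathrm{im}(y)f'_s(x))g'_s(x)\big)\big(f'_s(x)g^\circ_s(x)-(\mathrm{im}(y)f'_s(x))g'_s(x)\big)^{-1}.\] (3) If $\mathbb{S}_x\cap V(f)=\emptyset$ and $\mathbb{S}_x\cap V(g)$ is a singleton $\{z\}$, then $\mathbb{S}_x\cap V(f\cdot g)\subseteq\{w\}$, with \[w=\big(f^\circ_s(x)(zg'_s(x))-f'_s(x)(z\,\mathrm{im}(z)g'_s(x))\big)\big(f^\circ_s(x)g'_s(x)-f'_s(x)(\mathrm{im}(z)g'_s(x))\big)^{-1}.\] (4) If $\mathbb{S}_x\cap V(f)=\{y\}$ and $\mathbb{S}_x\cap V(g)=\{z\}$ for some $y,z\in\mathbb{S}_x$, then either (a) $\mathbb{S}_x\subseteq V(f\cdot g)$, or (b) $\mathbb{S}_x\cap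 V(f\cdot g)\subseteq\{w\}$ with \[w=\big(n(x)f'_s(x)g'_s(x)-(yf'_s(x))(zg'_s(x))\big)\big((f\cdot g)'_s(x)\big)^{-1},\] depending on whether or not $(f\cdot g)'_s(x)=(y^cf'_s(x))g'_s(x)-f'_s(x)(zg'_s(x))$ vanishes.
   Context: Let $A$ be a finite-dimensional real algebra with unit $1$ ($\mathbb{R}$ identified with $\mathbb{R}1$) which is alternative (the associator $(x,y,z)=(xy)z-x(yz)$ is alternating), with a $^*$-involution $x\mapsto x^c$ (real linear, $(x^c)^c=x$, $(xy)^c=y^cx^c$, $r^c=r$ for $r\in\mathbb{R}$). Let $t(x)=x+x^c$, $n(x)=xx^c$. Nucleus: $\{r:(r,a,b)=0\ \forall a,b\}$; $A$ is compatible if $t$ takes values in the nucleus. Center: $\{r$ in nucleus$: ra=ar\ \forall a\}$; $C_A=\{0\}\cup\{a:n(a),n(a^c)$ invertible elements of the center$\}$. $\mathbb{S}_A=\{J\in A:t(J)=0,n(J)=1\}$ (assumed non-empty), $Q_A=\mathbb{R}\cup\{x:t(x),n(x)\in\mathbb{R},4n(x)>t(x)^2\}$; every $x\in Q_A$ is $\alpha+\beta J$ with $\alpha,\beta\in\mathbb{R}$, $J\in\mathbb{S}_A$; $x^c=\alpha-\beta J$, $\mathrm{re}(x)=t(x)/2$, $\mathrm{im}(x)=x-\mathrm{re}(x)$, $\mathbb{S}_x=\{\alpha+\beta I:I\in\mathbb{S}_A\}$. Let $D\subseteq\mathbb{C}$ be non-empty, invariant under conjugation, $\Omega=\{\alpha+\beta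 J:\alpha+i\beta\in D,J\in\mathbb{S}_A\}$. $A_{\mathbb{C}}=\{a+\imath b\}$ with $(a+\imath b)(a'+\imath b')=aa'-bb'+\imath(ab'+ba')$, $\overline{a+\imath b}=a-\imath b$. A stem function $F=F_1+\imath F_2:D\to A_{\mathbb{C}}$ satisfies $F(\bar z)=\overline{F(z)}$ and induces the slice function $f=\mathcal{I}(F)$, $f(\alpha+\beta J)=F_1(\alpha+i\beta)+JF_2(\alpha+i\beta)$; $\mathcal{S}(\Omega)$ is the set of slice functions; slice product $f\cdot g=\mathcal{I}(FG)$. $V(h)=\{x:h(x)=0\}$. $f^\circ_s(x)=\frac12(f(x)+f(x^c))$, $f'_s(x)=\frac12\mathrm{im}(x)^{-1}(f(x)-f(x^c))$ for $x\in\Omega\setminus\mathbb{R}$. *)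

theory Defs
  imports "HOL-Analysis.Analysis"
begin

text \<open>A finite-dimensional real algebra is modelled as a type of class euclidean_space
(any finite-dimensional real vector space) with unit u, multiplication M and involution c.
The real number r is identified with r *R u.\<close>

definition assoc :: "('a::real_vector \<Rightarrow> 'a \<Rightarrow> 'a) \<Rightarrow> 'a \<Rightarrow> 'a \<Rightarrow> 'a \<Rightarrow> 'a" where
  "assoc M x y z = M (M x y) z - M x (M y z)"

definition alt_star_algebra :: "'a::euclidean_space \<Rightarrow> ('a \<Rightarrow> 'a \<Rightarrow> 'a) \<Rightarrow> ('a \<Rightarrow> 'a) \<Rightarrow> bool" where
  "alt_star_algebra u M c \<longleftrightarrow>
     bilinear M \<and> (\<forall>x. M u x = x \<and> M x u = x) \<and>
     (\<forall>x y. assoc M x x y = 0 \<and> assoc M x y x = 0 \<and> assoc M y x x = 0) \<and>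
     linear c \<and> (\<forall>x. c (c x) = x) \<and> (\<forall>x y. c (M x y) = M (c y) (c x)) \<and>
     (\<forall>r. c (r *\<^sub>R u) = r *\<^sub>R u)"

definition realA :: "'a::real_vector \<Rightarrow> 'a set" where
  "realA u = range (\<lambda>r. r *\<^sub>R u)"

definition tr :: "('a::real_vector \<Rightarrow> 'a) \<Rightarrow> 'a \<Rightarrow> 'a" where
  "tr c x = x + c x"

definition nm :: "('a::real_vector \<Rightarrow> 'a \<Rightarrow> 'a) \<Rightarrow> ('a \<Rightarrow> 'a) \<Rightarrow> 'a \<Rightarrow> 'a" where
  "nm M c x = M x (c x)"

definition nucleus :: "('a::real_vector \<Rightarrow> 'a \<Rightarrow> 'a) \<Rightarrow> 'a set" where
  "nucleus M = {r. \<forall>a b. assoc M r a b = 0}"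

definition compatible :: "('a::real_vector \<Rightarrow> 'a \<Rightarrow> 'a) \<Rightarrow> ('a \<Rightarrow> 'a) \<Rightarrow> bool" where
  "compatible M c \<longleftrightarrow> (\<forall>x. tr c x \<in> nucleus M)"

definition center :: "('a::real_vector \<Rightarrow> 'a \<Rightarrow> 'a) \<Rightarrow> 'a set" where
  "center M = {r \<in> nucleus M. \<forall>a. M r a = M a r}"

definition invertible_el :: "'a \<Rightarrow> ('a \<Rightarrow> 'a \<Rightarrow> 'a) \<Rightarrow> 'a \<Rightarrow> bool" where
  "invertible_el u M a \<longleftrightarrow> (\<exists>b. M a b = u \<and> M b a = u)"

text \<open>The (two-sided) inverse; only meaningful for invertible elements.\<close>
definition ainv :: "'a \<Rightarrow> ('a \<Rightarrow> 'a \<Rightarrow> 'a) \<Rightarrow> 'a \<Rightarrow> 'a" where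
  "ainv u M a = (SOME b. M a b = u \<and> M b a = u)"

definition CA :: "'a::real_vector \<Rightarrow> ('a \<Rightarrow> 'a \<Rightarrow> 'a) \<Rightarrow> ('a \<Rightarrow> 'a) \<Rightarrow> 'a set" where
  "CA u M c = {0} \<union> {a. nm M c a \<in> center M \<and> invertible_el u M (nm M c a) \<and>
                          nm M c (c a) \<in> center M \<and> invertible_el u M (nm M c (c a))}"

definition SA :: "'a::real_vector \<Rightarrow> ('a \<Rightarrow> 'a \<Rightarrow> 'a) \<Rightarrow> ('a \<Rightarrow> 'a) \<Rightarrow> 'a set" where
  "SA u M c = {J. tr c J = 0 \<and> nm M c J = u}"

definition re :: "('a::real_vector \<Rightarrow> 'a) \<Rightarrow> 'a \<Rightarrow> 'a" where
  "re c x = (1/2) *\<^sub>R tr c x"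

definition im :: "('a::real_vector \<Rightarrow> 'a) \<Rightarrow> 'a \<Rightarrow> 'a" where
  "im c x = x - re c x"

definition Omega :: "'a::real_vector \<Rightarrow> ('a \<Rightarrow> 'a \<Rightarrow> 'a) \<Rightarrow> ('a \<Rightarrow> 'a) \<Rightarrow> complex set \<Rightarrow> 'a set" where
  "Omega u M c D = {a *\<^sub>R u + b *\<^sub>R J | a b J. Complex a b \<in> D \<and> J \<in> SA u M c}"

definition sphere :: "'a::real_vector \<Rightarrow> ('a \<Rightarrow> 'a \<Rightarrow> 'a) \<Rightarrow> ('a \<Rightarrow> 'a) \<Rightarrow> 'a \<Rightarrow> 'a set" where
  "sphere u M c x = {a *\<^sub>R u + b *\<^sub>R I | a b I. I \<in> SA u M c \<and>
                        (\<exists>J \<in> SA u M c. x = a *\<^sub>R u + b *\<^sub>R J)}"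

text \<open>Stem functions D -> A_C, with A_C = A x A (F = F1 + i F2).\<close>
definition stem :: "complex set \<Rightarrow> (complex \<Rightarrow> 'a::real_vector \<times> 'a) \<Rightarrow> bool" where
  "stem D F \<longleftrightarrow> (\<forall>z\<in>D. F (cnj z) = (fst (F z), - snd (F z)))"

definition induces :: "'a::real_vector \<Rightarrow> ('a \<Rightarrow> 'a \<Rightarrow> 'a) \<Rightarrow> ('a \<Rightarrow> 'a) \<Rightarrow> complex set
                       \<Rightarrow> (complex \<Rightarrow> 'a \<times> 'a) \<Rightarrow> ('a \<Rightarrow> 'a) \<Rightarrow> bool" where
  "induces u M c D F f \<longleftrightarrow>
     (\<forall>a b J. Complex a b \<in> D \<and> J \<in> SA u M c \<longrightarrow>
        f (a *\<^sub>R u + b *\<^sub>R J) = fst (F (Complex a b)) + M J (snd (F (Complex a b))))"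

definition stem_mul :: "('a::real_vector \<Rightarrow> 'a \<Rightarrow> 'a) \<Rightarrow> (complex \<Rightarrow> 'a \<times> 'a) \<Rightarrow> (complex \<Rightarrow> 'a \<times> 'a)
                        \<Rightarrow> complex \<Rightarrow> 'a \<times> 'a" where
  "stem_mul M F G = (\<lambda>z. (M (fst (F z)) (fst (G z)) - M (snd (F z)) (snd (G z)),
                          M (fst (F z)) (snd (G z)) + M (snd (F z)) (fst (G z))))"

definition Vz :: "'a::real_vector \<Rightarrow> ('a \<Rightarrow> 'a \<Rightarrow> 'a) \<Rightarrow> ('a \<Rightarrow> 'a) \<Rightarrow> complex set \<Rightarrow> ('a \<Rightarrow> 'a) \<Rightarrow> 'a set" where
  "Vz u M c D f = {x \<in> Omega u M c D. f x = 0}"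

definition sph_val :: "('a::real_vector \<Rightarrow> 'a) \<Rightarrow> ('a \<Rightarrow> 'a) \<Rightarrow> 'a \<Rightarrow> 'a" where
  "sph_val c f x = (1/2) *\<^sub>R (f x + f (c x))"

definition sph_der :: "'a::real_vector \<Rightarrow> ('a \<Rightarrow> 'a \<Rightarrow> 'a) \<Rightarrow> ('a \<Rightarrow> 'a) \<Rightarrow> ('a \<Rightarrow> 'a) \<Rightarrow> 'a \<Rightarrow> 'a" where
  "sph_der u M c f x = (1/2) *\<^sub>R M (ainv u M (im c x)) (f x - f (c x))"

end

theory Submission
  imports Defs
begin

(*
  On a sphere S_x = {\<alpha> + \<beta>I : I \<in> S_A} a slice function is affine in the imaginary unit,
  f(\<alpha> + \<beta>I) = f0 + \<beta> (I f1) with f0 = f\<circ>_s(x) and f1 = f'_s(x), and the slice product is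
  (f\<cdot>g)(\<alpha> + \<beta>I) = h0 + \<beta> (I h1) with h0 = f0 g0 - \<beta>^2 f1 g1 and h1 = f0 g1 + f1 g0.
  A zero \<alpha> + \<beta>I of f forces f0 = -\<beta> (I f1), and a zero w of f\<cdot>g satisfies w h1 = \<alpha> h1 - h0,
  which determines w once h1 is invertible. Nonzero elements of C_A are invertible with central
  norms, and together with the Moufang identities this shows that a^-1 ((I a) d) d^-1 lies in S_A
  again for I in S_A. So if f has the single zero \<alpha> + \<beta>I on S_x while g has none, h1 = 0 is
  impossible: g would vanish at \<alpha> - \<beta> a^-1 ((I a) d) d^-1 with a = f1, d = g1 (symmetrically
  with f and g exchanged). If both have a zero, h1 = 0 forces h0 = 0 by the Moufang identities,
  and f\<cdot>g vanishes on all of S_x.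
*)

lemma stem_cnj_eq:
  assumes "stem D F" "Complex \<alpha> \<beta> \<in> D"
  shows "F (Complex \<alpha> (- \<beta>)) = (fst (F (Complex \<alpha> \<beta>)), - snd (F (Complex \<alpha> \<beta>)))"
  using assms unfolding stem_def by (metis complex_cnj complex.sel)

lemma stem_real_snd:
  assumes "stem D F" "Complex \<alpha> 0 \<in> D"
  shows "snd (F (Complex \<alpha> 0)) = (0 :: 'a::real_vector)"
proof -
  have "snd (F (Complex \<alpha> 0)) = - snd (F (Complex \<alpha> 0))"
    using arg_cong[OF stem_cnj_eq[OF assms], of snd] by simp
  then show ?thesis
    by (simp add: eq_neg_iff_add_eq_0 flip: scaleR_2)
qed

locale compatible_alt_star_algebra =
  fixes u :: "'a::euclidean_space" and M :: "'a \<Rightarrow> 'a \<Rightarrow> 'a" (infixl "\<odot>" 70) and c :: "'a \<Rightarrow> 'a"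
  assumes alg: "alt_star_algebra u M c" and comp: "compatible M c"
begin

lemma mult_linear_left: "linear (\<lambda>x. x \<odot> y)"
  and mult_linear_right: "linear (\<lambda>y. x \<odot> y)"
  using alg by (simp_all add: alt_star_algebra_def bilinear_def)

lemma mult_add_left [simp]: "(x + y) \<odot> z = x \<odot> z + y \<odot> z"
  and mult_add_right [simp]: "z \<odot> (x + y) = z \<odot> x + z \<odot> y"
  and mult_diff_left [simp]: "(x - y) \<odot> z = x \<odot> z - y \<odot> z"
  and mult_diff_right [simp]: "z \<odot> (x - y) = z \<odot> x - z \<odot> y"
  and mult_minus_left [simp]: "(- x) \<odot> z = - (x \<odot> z)"
  and mult_minus_right [simp]: "z \<odot> (- x) = - (z \<odot> x)"
  and mult_scaleR_left [simp]: "(r *\<^sub>R x) \<odot> z = r *\<^sub>R (x \<odot> z)"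
  and mult_scaleR_right [simp]: "z \<odot> (r *\<^sub>R x) = r *\<^sub>R (z \<odot> x)"
  and mult_zero_left [simp]: "0 \<odot> z = 0"
  and mult_zero_right [simp]: "z \<odot> 0 = 0"
  by (simp_all add: linear_add[OF mult_linear_left] linear_add[OF mult_linear_right]
      linear_diff[OF mult_linear_left] linear_diff[OF mult_linear_right]
      linear_neg[OF mult_linear_left] linear_neg[OF mult_linear_right]
      linear_scale[OF mult_linear_left] linear_scale[OF mult_linear_right]
      linear_0[OF mult_linear_left] linear_0[OF mult_linear_right])

lemma mult_unit_left [simp]: "u \<odot> x = x" and mult_unit_right [simp]: "x \<odot> u = x"
  using alg by (auto simp: alt_star_algebra_def)

lemma conj_linear: "linear c"
  using alg by (simp add: alt_star_algebra_def)

lemma conj_add [simp]: "c (x + y) = c x + c y"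
  and conj_diff [simp]: "c (x - y) = c x - c y"
  and conj_minus [simp]: "c (- x) = - c x"
  and conj_scaleR [simp]: "c (r *\<^sub>R x) = r *\<^sub>R c x"
  and conj_zero [simp]: "c 0 = 0"
  using conj_linear by (simp_all add: linear_add linear_diff linear_neg linear_scale linear_0)

lemma conj_conj [simp]: "c (c x) = x"
  and conj_mult [simp]: "c (x \<odot> y) = c y \<odot> c x"
  using alg by (simp_all add: alt_star_algebra_def)

lemma conj_unit [simp]: "c u = u"
  using alg unfolding alt_star_algebra_def by (metis scaleR_one)

abbreviation asc :: "'a \<Rightarrow> 'a \<Rightarrow> 'a \<Rightarrow> 'a" where "asc x y z \<equiv> assoc M x y z"

lemma asc_eq: "asc x y z = (x \<odot> y) \<odot> z - x \<odot> (y \<odot> z)"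
  by (simp add: assoc_def)

lemma asc_left_alternative: "asc x x y = 0"
  and asc_flexible: "asc x y x = 0"
  and asc_right_alternative: "asc y x x = 0"
  using alg by (auto simp: alt_star_algebra_def)

lemma asc_add [simp]:
  "asc (x + y) z w = asc x z w + asc y z w"
  "asc z (x + y) w = asc z x w + asc z y w"
  "asc z w (x + y) = asc z w x + asc z w y"
  and asc_diff [simp]:
  "asc (x - y) z w = asc x z w - asc y z w"
  "asc z (x - y) w = asc z x w - asc z y w"
  "asc z w (x - y) = asc z w x - asc z w y"
  and asc_minus [simp]:
  "asc (- x) z w = - asc x z w"
  "asc z (- x) w = - asc z x w"
  "asc z w (- x) = - asc z w x"
  and asc_scaleR [simp]:
  "asc (r *\<^sub>R x) z w = r *\<^sub>R asc x z w"
  "asc z (r *\<^sub>R x) w = r *\<^sub>R asc z x w"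
  "asc z w (r *\<^sub>R x) = r *\<^sub>R asc z w x"
  and asc_zero [simp]: "asc 0 z w = 0" "asc z 0 w = 0" "asc z w 0 = 0"
  by (simp_all add: asc_eq algebra_simps)

lemma asc_swap_12: "asc x y z = - asc y x z"
proof -
  have "asc (x + y) (x + y) z = asc x x z + asc x y z + asc y x z + asc y y z"
    by (simp add: algebra_simps)
  then have "asc x y z + asc y x z = 0"
    by (simp only: asc_left_alternative) simp
  then show ?thesis
    by (simp add: eq_neg_iff_add_eq_0 add.commute)
qed

lemma asc_swap_23: "asc x y z = - asc x z y"
proof -
  have "asc x (y + z) (y + z) = asc x y y + asc x y z + asc x z y + asc x z z"
    by (simp add: algebra_simps)
  then have "asc x y z + asc x z y = 0"
    by (simp only: asc_right_alternative) simp
  then show ?thesis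
    by (simp add: eq_neg_iff_add_eq_0 add.commute)
qed

lemma asc_swap_13: "asc x y z = - asc z y x"
  by (metis asc_swap_12 asc_swap_23 minus_minus)

lemma asc_cycle: "asc x y z = asc y z x"
  by (metis asc_swap_12 asc_swap_23 minus_minus)

lemma teichmuller:
  "asc (w \<odot> x) y z - asc w (x \<odot> y) z + asc w x (y \<odot> z) = w \<odot> asc x y z + asc w x y \<odot> z"
  by (simp add: asc_eq algebra_simps)

lemma asc_mult_middle_left: "asc x (x \<odot> y) z = asc x y z \<odot> x"
proof -
  let ?A = "asc x y z" and ?P = "asc x (x \<odot> y) z" and ?Q = "asc x y (z \<odot> x)"
  have PQ: "?P + ?Q = x \<odot> ?A + ?A \<odot> x"
    using teichmuller[of x y z x]
    unfolding asc_cycle[of x "x \<odot> y" z, symmetric] asc_cycle[of x y z, symmetric]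
    by (simp add: asc_flexible)
  have "asc (x \<odot> x) y z - ?P = x \<odot> ?A"
    using teichmuller[of x x y z] by (simp add: asc_left_alternative)
  moreover have "- ?Q + asc (x \<odot> x) y z = ?A \<odot> x"
    using teichmuller[of y z x x]
    unfolding asc_cycle[of x y "z \<odot> x", symmetric] asc_cycle[of "x \<odot> x" y z, symmetric]
      asc_cycle[of x y z, symmetric]
    by (simp add: asc_right_alternative)
  ultimately have P_Q: "?P + x \<odot> ?A = ?Q + ?A \<odot> x"
    by (simp add: algebra_simps)
  have "?P + ?P = (?P + ?Q) + (?P + x \<odot> ?A) - (?Q + x \<odot> ?A)"
    by (simp add: algebra_simps)
  also have "\<dots> = ?A \<odot> x + ?A \<odot> x"
    unfolding PQ P_Q by (simp add: algebra_simps)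
  finally have "2 *\<^sub>R ?P = 2 *\<^sub>R (?A \<odot> x)"
    by (simp add: scaleR_2)
  then show ?thesis
    by simp
qed

lemma asc_conj_eq: "c (asc x y z) = - asc (c z) (c y) (c x)"
  by (simp add: asc_eq)

lemma asc_mult_middle_right: "asc z (y \<odot> x) x = x \<odot> asc z y x"
  using arg_cong[OF asc_mult_middle_left[of "c x" "c y" "c z"], of c] by (simp add: asc_conj_eq)

lemma flexible: "(x \<odot> y) \<odot> x = x \<odot> (y \<odot> x)"
  using asc_flexible[of x y] by (simp add: asc_eq)

lemma left_alternative: "(x \<odot> x) \<odot> y = x \<odot> (x \<odot> y)"
  using asc_left_alternative[of x y] by (simp add: asc_eq)

lemma right_moufang: "((z \<odot> x) \<odot> y) \<odot> x = z \<odot> (x \<odot> (y \<odot> x))"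
proof -
  have "asc z (x \<odot> y) x = - (asc x y z \<odot> x)"
    using asc_swap_13[of z "x \<odot> y" x] asc_mult_middle_left[of x y z] by simp
  then have "asc (z \<odot> x) y x + asc z x (y \<odot> x) = 0"
    using teichmuller[of z x y x] asc_cycle[of z x y] by (simp add: asc_flexible)
  then show ?thesis
    by (simp add: asc_eq algebra_simps)
qed

lemma middle_moufang: "(x \<odot> y) \<odot> (z \<odot> x) = (x \<odot> (y \<odot> z)) \<odot> x"
  using asc_cycle[of x "x \<odot> y" z] asc_mult_middle_left[of x y z] by (simp add: asc_eq)

lemma asc_square_left: "asc (x \<odot> x) y z = x \<odot> asc x y z + asc x y z \<odot> x"
  using teichmuller[of x x y z] asc_mult_middle_left[of x y z]
  by (simp add: asc_left_alternative algebra_simps)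

lemma nucleus_asc:
  assumes "r \<in> nucleus M"
  shows "asc r x y = 0" and "asc x r y = 0" and "asc x y r = 0"
  using assms asc_swap_12[of x r y] asc_swap_13[of x y r] by (auto simp: nucleus_def)

lemma nucleus_mult_assoc:
  assumes "r \<in> nucleus M"
  shows "(r \<odot> x) \<odot> y = r \<odot> (x \<odot> y)" and "(x \<odot> r) \<odot> y = x \<odot> (r \<odot> y)"
  using nucleus_asc[OF assms, of x y] nucleus_asc[OF assms, of y] by (simp_all add: asc_eq)

lemma center_nucleus: "r \<in> center M \<Longrightarrow> r \<in> nucleus M"
  and center_commute: "r \<in> center M \<Longrightarrow> x \<odot> r = r \<odot> x"
  by (simp_all add: center_def)

lemma center_mult_assoc: "r \<in> center M \<Longrightarrow> (r \<odot> x) \<odot> y = r \<odot> (x \<odot> y)"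
  by (simp add: nucleus_mult_assoc center_nucleus)

lemma center_mult_left_commute: "r \<in> center M \<Longrightarrow> x \<odot> (r \<odot> y) = r \<odot> (x \<odot> y)"
  by (metis center_commute center_mult_assoc center_nucleus nucleus_mult_assoc(2))

lemma center_left_commute:
  assumes "r \<in> center M" "s \<in> center M"
  shows "r \<odot> (s \<odot> x) = s \<odot> (r \<odot> x)"
  by (metis assms center_commute center_mult_assoc)

lemma center_inverse_cancel: "r \<in> center M \<Longrightarrow> r \<odot> s = u \<Longrightarrow> r \<odot> (s \<odot> x) = x"
  by (metis center_mult_assoc mult_unit_left)

lemma center_mult:
  assumes r: "r \<in> center M" and s: "s \<in> center M"
  shows "r \<odot> s \<in> center M"
proof -
  have "asc (r \<odot> s) x y = 0" for x y
    using r s by (simp add: asc_eq center_mult_assoc)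
  moreover have "(r \<odot> s) \<odot> x = x \<odot> (r \<odot> s)" for x
    using r s by (metis center_commute center_mult_assoc center_mult_left_commute)
  ultimately show ?thesis
    by (simp add: center_def nucleus_def)
qed

lemma center_inverse:
  assumes r: "r \<in> center M" and rs: "r \<odot> s = u"
  shows "s \<in> center M"
proof -
  have sr: "s \<odot> r = u"
    using r rs center_commute by metis
  have s_nucleus: "s \<in> nucleus M"
    unfolding nucleus_def
  proof (intro CollectI allI)
    fix x y
    have "r \<odot> asc s x y = 0"
      using r rs by (simp add: asc_eq center_mult_assoc[symmetric])
    then have "s \<odot> (r \<odot> asc s x y) = 0"
      by simp
    then show "asc s x y = 0"
      using r sr by (simp add: nucleus_mult_assoc(2)[symmetric] center_nucleus)
  qed
  have "s \<odot> x = x \<odot> s" for x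
  proof -
    have "r \<odot> (s \<odot> x) = r \<odot> (x \<odot> s)"
      using r rs center_mult_left_commute[OF r, of x s] by (simp add: center_mult_assoc[symmetric])
    then show ?thesis
      using sr s_nucleus by (metis nucleus_mult_assoc(1) mult_unit_left)
  qed
  with s_nucleus show ?thesis
    by (simp add: center_def)
qed

lemma conj_eq_trace_diff: "c x = tr c x - x"
  by (simp add: tr_def)

lemma trace_nucleus: "tr c x \<in> nucleus M"
  using comp by (simp add: compatible_def)

lemma asc_conj:
  shows "asc (c x) y z = - asc x y z" and "asc y (c x) z = - asc y x z"
    and "asc y z (c x) = - asc y z x"
  using nucleus_asc[OF trace_nucleus[of x]] by (simp_all add: conj_eq_trace_diff[of x])

lemma norm_mult:
  assumes "z \<odot> c z = N" "N \<in> center M"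
  shows "(x \<odot> z) \<odot> c (x \<odot> z) = N \<odot> (x \<odot> c x)"
proof -
  have "asc (x \<odot> z) (c z) (c x) = 0"
    using asc_conj(2)[of "x \<odot> z" z "c x"] asc_conj(3)[of "x \<odot> z" z x] asc_cycle[of x "x \<odot> z" z]
      asc_mult_middle_left[of x z z] asc_right_alternative[of x z]
    by simp
  then have "(x \<odot> z) \<odot> c (x \<odot> z) = ((x \<odot> z) \<odot> c z) \<odot> c x"
    by (simp add: asc_eq)
  also have "(x \<odot> z) \<odot> c z = N \<odot> x"
    using asc_conj(3)[of x z z] asc_right_alternative[of x z] assms center_commute[OF assms(2)]
    by (simp add: asc_eq)
  finally show ?thesis
    using center_mult_assoc[OF assms(2)] by simp
qed

lemma moufang_conj_right:
  assumes N: "a \<odot> c a \<in> center M"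
  shows "(z \<odot> (y \<odot> a)) \<odot> c a = (z \<odot> a) \<odot> (c a \<odot> y)"
proof -
  let ?N = "a \<odot> c a"
  have "(y \<odot> a) \<odot> c a = ?N \<odot> y" for y
    using asc_conj(3)[of y a a] asc_right_alternative[of y a] center_commute[OF N]
    by (simp add: asc_eq)
  then have L: "(z \<odot> (y \<odot> a)) \<odot> c a = ?N \<odot> (z \<odot> y) + asc z (y \<odot> a) (c a)"
    and R: "(z \<odot> a) \<odot> (c a \<odot> y) = ?N \<odot> (z \<odot> y) - asc (z \<odot> a) (c a) y"
    using center_mult_left_commute[OF N, of z y] center_mult_assoc[OF N, of z y]
    by (simp_all add: asc_eq)
  have "asc (z \<odot> a) a y = a \<odot> asc y z a"
    using asc_cycle[of y "z \<odot> a" a] asc_mult_middle_right[of y z a] by simp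
  then have "asc z (y \<odot> a) (c a) + asc (z \<odot> a) (c a) y = - (a \<odot> (asc z y a + asc y z a))"
    using asc_mult_middle_right[of z y a] by (simp add: asc_conj)
  then have "asc z (y \<odot> a) (c a) + asc (z \<odot> a) (c a) y = 0"
    using asc_swap_12[of y z a] by simp
  moreover have "(z \<odot> (y \<odot> a)) \<odot> c a
      = (z \<odot> a) \<odot> (c a \<odot> y) + (asc z (y \<odot> a) (c a) + asc (z \<odot> a) (c a) y)"
    using L R by (simp add: algebra_simps)
  ultimately show ?thesis
    by simp
qed

lemma moufang_conj_left:
  assumes N: "a \<odot> c a \<in> center M" and comm: "c a \<odot> a = a \<odot> c a"
  shows "c a \<odot> ((y \<odot> a) \<odot> z) = (c a \<odot> y) \<odot> (a \<odot> z)"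
proof -
  let ?t = "tr c a" and ?A = "asc a y z"
  have trace_asc: "asc (?t \<odot> w) p q = ?t \<odot> asc w p q" for w p q
    using nucleus_mult_assoc(1)[OF trace_nucleus] by (simp add: asc_eq)
  have "c a \<odot> (y \<odot> a) = (c a \<odot> y) \<odot> a"
    using asc_conj(1)[of a y a] asc_flexible[of a y] by (simp add: asc_eq)
  then have "c a \<odot> ((y \<odot> a) \<odot> z) - (c a \<odot> y) \<odot> (a \<odot> z)
      = asc (c a \<odot> y) a z - asc (c a) (y \<odot> a) z"
    by (simp add: asc_eq)
  also have "asc (c a \<odot> y) a z = ?t \<odot> asc y a z - asc (a \<odot> y) a z"
    using trace_asc[of y a z] by (simp add: conj_eq_trace_diff[of a])
  also have "asc (a \<odot> y) a z = - (?A \<odot> a)"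
    using asc_cycle[of z "a \<odot> y" a] asc_swap_13[of z "a \<odot> y" a] asc_mult_middle_left[of a y z]
    by simp
  also have "asc (c a) (y \<odot> a) z = - (a \<odot> ?A)"
    using asc_conj(1)[of a "y \<odot> a" z] asc_swap_13[of a "y \<odot> a" z] asc_mult_middle_right[of z y a]
      asc_swap_13[of z y a]
    by simp
  also have "asc y a z = - ?A"
    using asc_swap_12[of y a z] by simp
  finally have "c a \<odot> ((y \<odot> a) \<odot> z) - (c a \<odot> y) \<odot> (a \<odot> z) = (a \<odot> ?A + ?A \<odot> a) - ?t \<odot> ?A"
    by (simp add: algebra_simps)
  moreover have "a \<odot> a = ?t \<odot> a - a \<odot> c a"
    using comm by (simp add: tr_def)
  then have "asc (a \<odot> a) y z = ?t \<odot> ?A"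
    using trace_asc[of a y z] nucleus_asc(1)[OF center_nucleus[OF N]] by simp
  ultimately show ?thesis
    using asc_square_left[of a y z] by simp
qed

text \<open>The element a has the central norm N = a c(a) = c(a) a, with central inverse N';
  then N' c(a) is the two-sided inverse of a.\<close>
definition norm_unit :: "'a \<Rightarrow> 'a \<Rightarrow> 'a \<Rightarrow> bool" where
  "norm_unit a N N' \<longleftrightarrow>
     N \<in> center M \<and> N' \<in> center M \<and> N \<odot> N' = u \<and> a \<odot> c a = N \<and> c a \<odot> a = N"

lemma CA_norm_unit:
  assumes "a \<in> CA u M c" "a \<noteq> 0"
  obtains N N' where "norm_unit a N N'"
proof -
  let ?N = "a \<odot> c a" and ?N2 = "c a \<odot> a"
  from assms have N: "?N \<in> center M" "invertible_el u M ?N" and N2: "?N2 \<in> center M" "invertible_el u M ?N2"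
    by (auto simp: CA_def nm_def)
  from N(2) obtain N' where N': "?N \<odot> N' = u"
    unfolding invertible_el_def by blast
  from N2(2) obtain N2' where N2': "?N2 \<odot> N2' = u"
    unfolding invertible_el_def by blast
  \<comment> \<open>the two norms agree: a annihilates their difference, hence so does c a \<odot> a\<close>
  have "a \<odot> ?N2 = ?N \<odot> a"
    using asc_conj(2)[of a a a] asc_left_alternative[of a a] by (simp add: asc_eq asc_flexible)
  then have "a \<odot> (?N - ?N2) = 0"
    using center_commute[OF N(1), of a] center_commute[OF N2(1), of a] by simp
  moreover have "c a \<odot> (a \<odot> (?N - ?N2)) = ?N2 \<odot> (?N - ?N2)"
    using asc_conj(1)[of a a "?N - ?N2"] asc_left_alternative[of a "?N - ?N2"]
    by (simp add: asc_eq del: mult_diff_right)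
  ultimately have "N2' \<odot> (?N2 \<odot> (?N - ?N2)) = 0"
    by simp
  moreover have "N2' \<odot> (?N2 \<odot> (?N - ?N2)) = ?N - ?N2"
    using center_inverse_cancel[OF center_inverse[OF N2(1) N2'], of ?N2]
      center_commute[OF N2(1), of N2'] N2'
    by (simp del: mult_diff_right)
  ultimately have "?N = ?N2"
    by simp
  then have "norm_unit a ?N N'"
    using N(1) center_inverse[OF N(1) N'] N' by (simp add: norm_unit_def)
  then show ?thesis
    by (rule that)
qed

lemma norm_unitD:
  assumes "norm_unit a N N'"
  shows "N \<in> center M" "N' \<in> center M" "N \<odot> N' = u" "a \<odot> c a = N" "c a \<odot> a = N" "N' \<odot> N = u"
  using assms center_commute by (auto simp: norm_unit_def)

context
  fixes a N N' assumes unit: "norm_unit a N N'"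
begin

lemma mult_mult_inverse: "(x \<odot> a) \<odot> (N' \<odot> c a) = x"
proof -
  have "(x \<odot> a) \<odot> c a = N \<odot> x"
    using asc_conj(3)[of x a a] asc_right_alternative[of x a] norm_unitD(4)[OF unit]
      center_commute[OF norm_unitD(1)[OF unit], of x]
    by (simp add: asc_eq)
  then show ?thesis
    using center_mult_left_commute[OF norm_unitD(2)[OF unit], of "x \<odot> a" "c a"]
      center_inverse_cancel[OF norm_unitD(2,6)[OF unit]]
    by simp
qed

lemma inverse_mult_mult: "(N' \<odot> c a) \<odot> (a \<odot> x) = x"
proof -
  have "c a \<odot> (a \<odot> x) = N \<odot> x"
    using asc_conj(1)[of a a x] asc_left_alternative[of a x] norm_unitD(5)[OF unit]
    by (simp add: asc_eq)
  then show ?thesis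
    using center_mult_assoc[OF norm_unitD(2)[OF unit], of "c a" "a \<odot> x"]
      center_inverse_cancel[OF norm_unitD(2,6)[OF unit]]
    by simp
qed

lemma mult_inverse_mult: "(x \<odot> (N' \<odot> c a)) \<odot> a = x"
proof -
  have "(x \<odot> c a) \<odot> a = N \<odot> x"
    using asc_conj(2)[of x a a] asc_right_alternative[of x a] norm_unitD(5)[OF unit]
      center_commute[OF norm_unitD(1)[OF unit], of x]
    by (simp add: asc_eq)
  then show ?thesis
    using center_mult_left_commute[OF norm_unitD(2)[OF unit], of x "c a"]
      center_mult_assoc[OF norm_unitD(2)[OF unit], of "x \<odot> c a" a]
      center_inverse_cancel[OF norm_unitD(2,6)[OF unit]]
    by simp
qed

lemma ainv_norm_unit: "ainv u M a = N' \<odot> c a"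
proof -
  have "\<exists>b. a \<odot> b = u \<and> b \<odot> a = u"
    using mult_mult_inverse[of u] inverse_mult_mult[of u] by auto
  then have "ainv u M a \<odot> a = u"
    unfolding ainv_def by (rule someI2_ex) simp
  then show ?thesis
    using mult_mult_inverse[of "ainv u M a"] by simp
qed

lemma mult_right_cancel: "x \<odot> a = y \<odot> a \<Longrightarrow> x = y"
  by (metis mult_mult_inverse)

lemma mult_left_cancel: "a \<odot> x = a \<odot> y \<Longrightarrow> x = y"
  by (metis inverse_mult_mult)

lemma conj_norm_inverse: "c N' = N'"
proof -
  have "c N = N"
    using norm_unitD(4)[OF unit] by (metis conj_conj conj_mult)
  then have "c N' \<odot> N = u"
    using arg_cong[OF norm_unitD(3)[OF unit], of c] by simp
  then show ?thesis
    using nucleus_mult_assoc(2)[OF center_nucleus[OF norm_unitD(1)[OF unit]], of "c N'" N']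
      norm_unitD(3)[OF unit]
    by simp
qed

lemma conj_inverse: "c (N' \<odot> c a) = N' \<odot> a"
  using conj_norm_inverse center_commute[OF norm_unitD(2)[OF unit], of a] by simp

lemma inverse_norm: "(N' \<odot> c a) \<odot> c (N' \<odot> c a) = N'"
proof -
  have "(N' \<odot> c a) \<odot> (N' \<odot> a) = N' \<odot> (N' \<odot> (c a \<odot> a))"
    using center_mult_assoc[OF norm_unitD(2)[OF unit], of "c a" "N' \<odot> a"]
      center_mult_left_commute[OF norm_unitD(2)[OF unit], of "c a" a]
    by simp
  then show ?thesis
    using norm_unitD(5,6)[OF unit] conj_inverse by simp
qed

end

lemma SA_iff: "J \<in> SA u M c \<longleftrightarrow> c J = - J \<and> J \<odot> c J = u"
  by (simp add: SA_def tr_def nm_def add_eq_0_iff)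

lemma SA_conj: "J \<in> SA u M c \<Longrightarrow> c J = - J"
  by (simp add: SA_iff)

lemma SA_mult_conj: "J \<in> SA u M c \<Longrightarrow> J \<odot> c J = u"
  by (simp add: SA_def nm_def)

lemma SA_square: "J \<in> SA u M c \<Longrightarrow> J \<odot> J = - u"
proof -
  assume J: "J \<in> SA u M c"
  have "- (J \<odot> J) = u"
    using SA_conj[OF J] SA_mult_conj[OF J] by simp
  then show ?thesis
    by (metis minus_minus)
qed

lemma SA_mult_mult: "J \<in> SA u M c \<Longrightarrow> J \<odot> (J \<odot> x) = - x"
  by (metis SA_square left_alternative mult_minus_left mult_unit_left)

lemma SA_uminus:
  assumes "J \<in> SA u M c"
  shows "- J \<in> SA u M c"
  unfolding SA_iff using SA_conj[OF assms] SA_square[OF assms] by simp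

lemma SA_twisted_product:
  assumes d: "norm_unit d Nd Nd'" and I1: "I1 \<in> SA u M c" and I2: "I2 \<in> SA u M c"
    and sum_zero: "(I1 \<odot> a) \<odot> d = - (a \<odot> (I2 \<odot> d))"
  shows "(I1 \<odot> a) \<odot> (I2 \<odot> d) = a \<odot> d"
proof -
  let ?Z = "I2 \<odot> d" and ?d' = "Nd' \<odot> c d"
  have "I1 \<odot> a = - ((a \<odot> ?Z) \<odot> ?d')"
    using mult_mult_inverse[OF d, of "I1 \<odot> a"] sum_zero by simp
  then have "(I1 \<odot> a) \<odot> ?Z = - (a \<odot> (?Z \<odot> (?d' \<odot> ?Z)))"
    by (simp add: right_moufang)
  also have "?Z \<odot> (?d' \<odot> ?Z) = (?Z \<odot> ?d') \<odot> ?Z"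
    by (rule flexible[symmetric])
  also have "\<dots> = - d"
    using mult_mult_inverse[OF d, of I2] SA_mult_mult[OF I2] by simp
  finally show ?thesis
    by simp
qed

text \<open>Both sides are compared after right multiplication by d: the middle Moufang identity and
  moufang_conj_left carry the conjugation back onto the element itself.\<close>
lemma conj_twist_left:
  assumes ua: "norm_unit a Na Na'" and ud: "norm_unit d Nd Nd'" and I: "I \<in> SA u M c"
  shows "c (((Na' \<odot> c a) \<odot> ((I \<odot> a) \<odot> d)) \<odot> (Nd' \<odot> c d))
    = - (((Na' \<odot> c a) \<odot> ((I \<odot> a) \<odot> d)) \<odot> (Nd' \<odot> c d))"
proof -
  let ?w = "(I \<odot> a) \<odot> d" and ?q = "c a \<odot> I"
  let ?Y = "(Na' \<odot> c a) \<odot> ?w"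
  let ?K = "?Y \<odot> (Nd' \<odot> c d)"
  let ?P = "(c d \<odot> ?q) \<odot> a"
  note a = norm_unitD[OF ua] and d = norm_unitD[OF ud]
  have Y: "?Y = Na' \<odot> (c a \<odot> ?w)"
    using center_mult_assoc[OF a(2)] .
  have "c ?Y = - (Na' \<odot> ?P)"
    unfolding Y using conj_norm_inverse[OF ua] SA_conj[OF I] center_commute[OF a(2)] by simp
  then have "- c ?K = (Nd' \<odot> d) \<odot> (Na' \<odot> ?P)"
    using conj_inverse[OF ud] by simp
  also have "\<dots> = Nd' \<odot> (Na' \<odot> (d \<odot> ?P))"
    using center_mult_assoc[OF d(2), of d] center_mult_left_commute[OF a(2), of d ?P] by simp
  finally have "(- c ?K) \<odot> d = Nd' \<odot> (Na' \<odot> ((d \<odot> ?P) \<odot> d))"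
    using center_mult_assoc[OF d(2)] center_mult_assoc[OF a(2)] by simp
  also have "(d \<odot> ?P) \<odot> d = (d \<odot> (c d \<odot> ?q)) \<odot> (a \<odot> d)"
    by (rule middle_moufang[symmetric])
  also have "d \<odot> (c d \<odot> ?q) = Nd \<odot> ?q"
    using asc_conj(2)[of d d ?q] asc_left_alternative[of d ?q] d(4) by (simp add: asc_eq)
  also have "(Nd \<odot> ?q) \<odot> (a \<odot> d) = Nd \<odot> (?q \<odot> (a \<odot> d))"
    by (rule center_mult_assoc[OF d(1)])
  also have "Na' \<odot> (Nd \<odot> (?q \<odot> (a \<odot> d))) = Nd \<odot> (Na' \<odot> (?q \<odot> (a \<odot> d)))"
    by (rule center_left_commute[OF a(2) d(1)])
  also have "Nd' \<odot> (Nd \<odot> (Na' \<odot> (?q \<odot> (a \<odot> d)))) = Na' \<odot> (?q \<odot> (a \<odot> d))"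
    by (rule center_inverse_cancel[OF d(2) d(6)])
  also have "\<dots> = ?K \<odot> d"
    unfolding mult_inverse_mult[OF ud] Y using moufang_conj_left[of a I d] a(1,4,5) by simp
  finally show ?thesis
    using mult_right_cancel[OF ud] by (metis minus_minus)
qed

lemma SA_twist_left:
  assumes ua: "norm_unit a Na Na'" and ud: "norm_unit d Nd Nd'" and I: "I \<in> SA u M c"
  shows "((Na' \<odot> c a) \<odot> ((I \<odot> a) \<odot> d)) \<odot> (Nd' \<odot> c d) \<in> SA u M c"
proof -
  let ?w = "(I \<odot> a) \<odot> d"
  let ?Y = "(Na' \<odot> c a) \<odot> ?w"
  let ?K = "?Y \<odot> (Nd' \<odot> c d)"
  note a = norm_unitD[OF ua] and d = norm_unitD[OF ud]
  note conj_K = conj_twist_left[OF ua ud I]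
  have "(I \<odot> a) \<odot> c (I \<odot> a) = Na"
    using norm_mult[OF a(4) a(1), of I] SA_mult_conj[OF I] by simp
  then have "?w \<odot> c ?w = Nd \<odot> Na"
    using norm_mult[OF d(4) d(1), of "I \<odot> a"] by simp
  then have "?Y \<odot> c ?Y = Nd"
    using norm_mult[of ?w, OF _ center_mult[OF d(1) a(1)], of "Na' \<odot> c a"] inverse_norm[OF ua]
      center_mult_assoc[OF d(1), of Na Na'] a(3)
    by simp
  then have "?K \<odot> c ?K = u"
    using norm_mult[OF inverse_norm[OF ud] d(2), of ?Y] d(6) by simp
  with conj_K show ?thesis
    by (simp add: SA_iff)
qed

lemma conj_twist_right:
  assumes ua: "norm_unit a Na Na'" and ud: "norm_unit d Nd Nd'" and I: "I \<in> SA u M c"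
  shows "c (((a \<odot> (I \<odot> d)) \<odot> (Nd' \<odot> c d)) \<odot> (Na' \<odot> c a))
    = - (((a \<odot> (I \<odot> d)) \<odot> (Nd' \<odot> c d)) \<odot> (Na' \<odot> c a))"
proof -
  let ?w = "I \<odot> d" and ?q = "c d \<odot> I"
  let ?Y = "(a \<odot> ?w) \<odot> (Nd' \<odot> c d)"
  let ?K = "?Y \<odot> (Na' \<odot> c a)"
  let ?p = "?q \<odot> c a"
  note a = norm_unitD[OF ua] and d = norm_unitD[OF ud]
  have Y: "?Y = Nd' \<odot> ((a \<odot> ?w) \<odot> c d)"
    using center_mult_left_commute[OF d(2)] .
  have "c ?Y = - (Nd' \<odot> (d \<odot> ?p))"
    unfolding Y using conj_norm_inverse[OF ud] SA_conj[OF I] center_commute[OF d(2)] by simp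
  then have "- c ?K = (Na' \<odot> a) \<odot> (Nd' \<odot> (d \<odot> ?p))"
    using conj_inverse[OF ua] by simp
  also have "\<dots> = Na' \<odot> (Nd' \<odot> (a \<odot> (d \<odot> ?p)))"
    using center_mult_assoc[OF a(2), of a] center_mult_left_commute[OF d(2), of a "d \<odot> ?p"] by simp
  finally have "(- c ?K) \<odot> a = Na' \<odot> (Nd' \<odot> ((a \<odot> (d \<odot> ?p)) \<odot> a))"
    using center_mult_assoc[OF d(2)] center_mult_assoc[OF a(2)] by simp
  also have "(a \<odot> (d \<odot> ?p)) \<odot> a = (a \<odot> d) \<odot> (?p \<odot> a)"
    by (rule middle_moufang[symmetric])
  also have "?p \<odot> a = Na \<odot> ?q"
    using asc_conj(2)[of ?q a a] asc_right_alternative[of ?q a] a(5) center_commute[OF a(1), of ?q]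
    by (simp add: asc_eq)
  also have "(a \<odot> d) \<odot> (Na \<odot> ?q) = Na \<odot> ((a \<odot> d) \<odot> ?q)"
    by (rule center_mult_left_commute[OF a(1)])
  also have "Nd' \<odot> (Na \<odot> ((a \<odot> d) \<odot> ?q)) = Na \<odot> (Nd' \<odot> ((a \<odot> d) \<odot> ?q))"
    by (rule center_left_commute[OF d(2) a(1)])
  also have "Na' \<odot> (Na \<odot> (Nd' \<odot> ((a \<odot> d) \<odot> ?q))) = Nd' \<odot> ((a \<odot> d) \<odot> ?q)"
    by (rule center_inverse_cancel[OF a(2) a(6)])
  also have "\<dots> = ?K \<odot> a"
    unfolding mult_inverse_mult[OF ua] Y using moufang_conj_right[of d a I] d(1,4) by simp
  finally show ?thesis
    using mult_right_cancel[OF ua] by (metis minus_minus)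
qed

lemma SA_twist_right:
  assumes ua: "norm_unit a Na Na'" and ud: "norm_unit d Nd Nd'" and I: "I \<in> SA u M c"
  shows "((a \<odot> (I \<odot> d)) \<odot> (Nd' \<odot> c d)) \<odot> (Na' \<odot> c a) \<in> SA u M c"
proof -
  let ?w = "I \<odot> d"
  let ?Y = "(a \<odot> ?w) \<odot> (Nd' \<odot> c d)"
  let ?K = "?Y \<odot> (Na' \<odot> c a)"
  note a = norm_unitD[OF ua] and d = norm_unitD[OF ud]
  note conj_K = conj_twist_right[OF ua ud I]
  have "?w \<odot> c ?w = Nd"
    using norm_mult[OF d(4) d(1), of I] SA_mult_conj[OF I] by simp
  then have "(a \<odot> ?w) \<odot> c (a \<odot> ?w) = Nd \<odot> Na"
    using norm_mult[OF _ d(1), of ?w a] a(4) by simp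
  then have "?Y \<odot> c ?Y = Na"
    using norm_mult[OF inverse_norm[OF ud] d(2), of "a \<odot> ?w"] center_inverse_cancel[OF d(2) d(6)]
    by simp
  then have "?K \<odot> c ?K = u"
    using norm_mult[OF inverse_norm[OF ua] a(2), of ?Y] a(6) by simp
  with conj_K show ?thesis
    by (simp add: SA_iff)
qed

lemma unit_zero_trivial: "u = 0 \<Longrightarrow> (x :: 'a) = 0"
  using mult_unit_right[of x] by simp

lemma SA_nonzero: "u \<noteq> 0 \<Longrightarrow> J \<in> SA u M c \<Longrightarrow> J \<noteq> 0"
  using SA_mult_conj by fastforce

lemma conj_sphere_point: "J \<in> SA u M c \<Longrightarrow> c (\<alpha> *\<^sub>R u + \<beta> *\<^sub>R J) = \<alpha> *\<^sub>R u - \<beta> *\<^sub>R J"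
  by (simp add: SA_conj)

lemma re_sphere_point: "J \<in> SA u M c \<Longrightarrow> re c (\<alpha> *\<^sub>R u + \<beta> *\<^sub>R J) = \<alpha> *\<^sub>R u"
  by (simp add: re_def tr_def SA_conj flip: scaleR_2)

lemma im_sphere_point: "J \<in> SA u M c \<Longrightarrow> im c (\<alpha> *\<^sub>R u + \<beta> *\<^sub>R J) = \<beta> *\<^sub>R J"
  by (simp add: im_def re_sphere_point)

lemma nm_sphere_point: "J \<in> SA u M c \<Longrightarrow> nm M c (\<alpha> *\<^sub>R u + \<beta> *\<^sub>R J) = (\<alpha> * \<alpha> + \<beta> * \<beta>) *\<^sub>R u"
  by (simp add: nm_def SA_conj SA_square algebra_simps)

lemma sphere_point_eq:
  assumes u: "u \<noteq> 0" and J: "J \<in> SA u M c" and J': "J' \<in> SA u M c"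
    and eq: "\<alpha> *\<^sub>R u + \<beta> *\<^sub>R J = \<alpha>' *\<^sub>R u + \<beta>' *\<^sub>R J'"
  shows "\<alpha> = \<alpha>'" and "\<beta> *\<^sub>R J = \<beta>' *\<^sub>R J'" and "\<beta> = \<beta>' \<or> \<beta> = - \<beta>'"
proof -
  show \<alpha>: "\<alpha> = \<alpha>'"
    using arg_cong[OF eq, of "re c"] u by (simp add: re_sphere_point[OF J] re_sphere_point[OF J'])
  then show \<beta>J: "\<beta> *\<^sub>R J = \<beta>' *\<^sub>R J'"
    using eq by simp
  have "(\<beta> * \<beta>) *\<^sub>R u = (\<beta>' * \<beta>') *\<^sub>R u"
    using nm_sphere_point[OF J, of 0 \<beta>] nm_sphere_point[OF J', of 0 \<beta>'] \<beta>J by simp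
  then show "\<beta> = \<beta>' \<or> \<beta> = - \<beta>'"
    using u by (simp add: power2_eq_iff flip: power2_eq_square)
qed

lemma real_sphere_point:
  assumes u: "u \<noteq> 0" and J: "J \<in> SA u M c" and x: "\<alpha> *\<^sub>R u + \<beta> *\<^sub>R J \<in> realA u"
  shows "\<beta> = 0"
proof -
  obtain r where "\<alpha> *\<^sub>R u + \<beta> *\<^sub>R J = r *\<^sub>R u + 0 *\<^sub>R J"
    using x by (auto simp: realA_def)
  then have "\<beta> *\<^sub>R J = 0"
    using sphere_point_eq(2)[OF u J J] by simp
  then show ?thesis
    using SA_nonzero[OF u J] by simp
qed

lemma sphere_eq:
  assumes u: "u \<noteq> 0" and J: "J \<in> SA u M c"
  shows "sphere u M c (\<alpha> *\<^sub>R u + \<beta> *\<^sub>R J) = {\<alpha> *\<^sub>R u + \<beta> *\<^sub>R I | I. I \<in> SA u M c}"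
proof (intro subset_antisym subsetI)
  fix y assume "y \<in> sphere u M c (\<alpha> *\<^sub>R u + \<beta> *\<^sub>R J)"
  then obtain \<alpha>' \<beta>' I J' where y: "y = \<alpha>' *\<^sub>R u + \<beta>' *\<^sub>R I" and I: "I \<in> SA u M c"
    and J': "J' \<in> SA u M c" and eq: "\<alpha> *\<^sub>R u + \<beta> *\<^sub>R J = \<alpha>' *\<^sub>R u + \<beta>' *\<^sub>R J'"
    unfolding sphere_def by blast
  from sphere_point_eq[OF u J J' eq] have "y = \<alpha> *\<^sub>R u + \<beta> *\<^sub>R I \<or> y = \<alpha> *\<^sub>R u + \<beta> *\<^sub>R (- I)"
    using y by auto
  then show "y \<in> {\<alpha> *\<^sub>R u + \<beta> *\<^sub>R I | I. I \<in> SA u M c}"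
    using I SA_uminus[OF I] by blast
next
  fix y assume "y \<in> {\<alpha> *\<^sub>R u + \<beta> *\<^sub>R I | I. I \<in> SA u M c}"
  then show "y \<in> sphere u M c (\<alpha> *\<^sub>R u + \<beta> *\<^sub>R J)"
    unfolding sphere_def using J by blast
qed

lemma center_scaleR_unit: "r *\<^sub>R u \<in> center M"
  by (simp add: center_def nucleus_def asc_eq)

lemma ainv_scaleR_SA:
  assumes J: "J \<in> SA u M c" and \<beta>: "\<beta> \<noteq> 0"
  shows "ainv u M (\<beta> *\<^sub>R J) = (- (1 / \<beta>)) *\<^sub>R J"
proof -
  have "norm_unit (\<beta> *\<^sub>R J) ((\<beta> * \<beta>) *\<^sub>R u) ((1 / (\<beta> * \<beta>)) *\<^sub>R u)"
    unfolding norm_unit_def using center_scaleR_unit SA_mult_conj[OF J] SA_conj[OF J] SA_square[OF J] \<beta>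
    by simp
  then show ?thesis
    using ainv_norm_unit SA_conj[OF J] \<beta> by (simp add: field_simps)
qed

lemma stem_stem_mul: "stem D F \<Longrightarrow> stem D G \<Longrightarrow> stem D (stem_mul M F G)"
  by (simp add: stem_def stem_mul_def)

lemma induces_eval:
  "induces u M c D F f \<Longrightarrow> Complex \<alpha> \<beta> \<in> D \<Longrightarrow> I \<in> SA u M c \<Longrightarrow>
    f (\<alpha> *\<^sub>R u + \<beta> *\<^sub>R I) = fst (F (Complex \<alpha> \<beta>)) + I \<odot> snd (F (Complex \<alpha> \<beta>))"
  by (simp add: induces_def)

context
  fixes D F f \<alpha> \<beta> J
  assumes F: "stem D F" and f: "induces u M c D F f"
    and z: "Complex \<alpha> \<beta> \<in> D" and z_cnj: "Complex \<alpha> (- \<beta>) \<in> D" and J: "J \<in> SA u M c"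
begin

lemma induces_eval_conj:
  "f (c (\<alpha> *\<^sub>R u + \<beta> *\<^sub>R J)) = fst (F (Complex \<alpha> \<beta>)) - J \<odot> snd (F (Complex \<alpha> \<beta>))"
  unfolding conj_sphere_point[OF J] using induces_eval[OF f z_cnj J] stem_cnj_eq[OF F z] by simp

lemma sph_val_eval: "sph_val c f (\<alpha> *\<^sub>R u + \<beta> *\<^sub>R J) = fst (F (Complex \<alpha> \<beta>))"
  using induces_eval[OF f z J] induces_eval_conj by (simp add: sph_val_def flip: scaleR_2)

lemma sph_der_eval:
  assumes \<beta>: "\<beta> \<noteq> 0"
  shows "sph_der u M c f (\<alpha> *\<^sub>R u + \<beta> *\<^sub>R J) = (1 / \<beta>) *\<^sub>R snd (F (Complex \<alpha> \<beta>))"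
  using induces_eval[OF f z J] induces_eval_conj \<beta> SA_mult_mult[OF J]
  by (simp add: sph_der_def im_sphere_point[OF J] ainv_scaleR_SA[OF J] flip: scaleR_2)

end

lemma sphere_zero_location:
  assumes e: "norm_unit e N N'" and zero: "C + \<beta> *\<^sub>R (K \<odot> e) = 0"
  shows "\<alpha> *\<^sub>R u + \<beta> *\<^sub>R K = (\<alpha> *\<^sub>R e - C) \<odot> (N' \<odot> c e)"
proof -
  have "(\<alpha> *\<^sub>R u + \<beta> *\<^sub>R K) \<odot> e = \<alpha> *\<^sub>R e - C"
    using zero by (simp add: add_eq_0_iff)
  then show ?thesis
    using mult_mult_inverse[OF e, of "\<alpha> *\<^sub>R u + \<beta> *\<^sub>R K"] by simp
qed

lemma OmegaE:
  assumes "x \<in> Omega u M c D"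
  obtains \<alpha> \<beta> J where "x = \<alpha> *\<^sub>R u + \<beta> *\<^sub>R J" "Complex \<alpha> \<beta> \<in> D" "J \<in> SA u M c"
  using assms unfolding Omega_def by blast

lemma sphere_subset_Omega:
  assumes u: "u \<noteq> 0" and J: "J \<in> SA u M c" and z: "Complex \<alpha> \<beta> \<in> D"
  shows "sphere u M c (\<alpha> *\<^sub>R u + \<beta> *\<^sub>R J) \<subseteq> Omega u M c D"
  unfolding sphere_eq[OF u J] Omega_def using z by blast

lemma product_zero_at_real_point:
  assumes u: "u \<noteq> 0" and F: "stem D F" and G: "stem D G"
    and f: "induces u M c D F f" and g: "induces u M c D G g" and h: "induces u M c D (stem_mul M F G) h"
    and x: "x \<in> Omega u M c D \<inter> realA u" and zero: "x \<in> Vz u M c D f \<union> Vz u M c D g"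
  shows "x \<in> Vz u M c D h"
proof -
  obtain \<alpha> \<beta> J where x_eq: "x = \<alpha> *\<^sub>R u + \<beta> *\<^sub>R J" and z: "Complex \<alpha> \<beta> \<in> D" and J: "J \<in> SA u M c"
    using x by (auto elim: OmegaE)
  have "\<beta> = 0"
    using real_sphere_point[OF u J] x x_eq by blast
  then have "f x = fst (F (Complex \<alpha> \<beta>))" "g x = fst (G (Complex \<alpha> \<beta>))"
    and "h x = fst (F (Complex \<alpha> \<beta>)) \<odot> fst (G (Complex \<alpha> \<beta>))"
    using z stem_real_snd[OF F] stem_real_snd[OF G] x_eq
      induces_eval[OF f z J] induces_eval[OF g z J] induces_eval[OF h z J]
    by (simp_all add: stem_mul_def)
  then show ?thesis
    using x zero by (auto simp: Vz_def)
qed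

lemma SA_affine_zero:
  assumes J: "J \<in> SA u M c" and "P + J \<odot> Q = 0" and "P + (- J) \<odot> Q = 0"
  shows "P = 0" and "Q = 0"
proof -
  have "2 *\<^sub>R P = 0"
    using assms(2,3) by (simp add: scaleR_2 algebra_simps eq_neg_iff_add_eq_0)
  then show "P = 0"
    by simp
  then have "J \<odot> (J \<odot> Q) = 0"
    using assms(2) by simp
  then show "Q = 0"
    using SA_mult_mult[OF J] by simp
qed

lemma product_vanishes_on_sphere:
  assumes u: "u \<noteq> 0"
    and f: "induces u M c D F f" and g: "induces u M c D G g" and h: "induces u M c D (stem_mul M F G) h"
    and x: "x \<in> Omega u M c D"
    and vanish: "sphere u M c x \<subseteq> Vz u M c D f \<or> sphere u M c x \<subseteq> Vz u M c D g"
  shows "sphere u M c x \<subseteq> Vz u M c D h"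
proof -
  obtain \<alpha> \<beta> J where x_eq: "x = \<alpha> *\<^sub>R u + \<beta> *\<^sub>R J" and z: "Complex \<alpha> \<beta> \<in> D" and J: "J \<in> SA u M c"
    using x by (rule OmegaE)
  have S: "sphere u M c x = {\<alpha> *\<^sub>R u + \<beta> *\<^sub>R I | I. I \<in> SA u M c}"
    unfolding x_eq by (rule sphere_eq[OF u J])
  have pts: "\<alpha> *\<^sub>R u + \<beta> *\<^sub>R J \<in> sphere u M c x" "\<alpha> *\<^sub>R u + \<beta> *\<^sub>R (- J) \<in> sphere u M c x"
    unfolding S using J SA_uminus[OF J] by blast+
  have stem_zero: "fst (K (Complex \<alpha> \<beta>)) = 0 \<and> snd (K (Complex \<alpha> \<beta>)) = 0"
    if k: "induces u M c D K k" and k_vanish: "sphere u M c x \<subseteq> Vz u M c D k" for K k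
  proof -
    have "k (\<alpha> *\<^sub>R u + \<beta> *\<^sub>R J) = 0" "k (\<alpha> *\<^sub>R u + \<beta> *\<^sub>R (- J)) = 0"
      using pts k_vanish unfolding Vz_def by blast+
    then show ?thesis
      using SA_affine_zero[OF J] induces_eval[OF k z J] induces_eval[OF k z SA_uminus[OF J]]
      by metis
  qed
  have "(fst (F (Complex \<alpha> \<beta>)) = 0 \<and> snd (F (Complex \<alpha> \<beta>)) = 0)
      \<or> (fst (G (Complex \<alpha> \<beta>)) = 0 \<and> snd (G (Complex \<alpha> \<beta>)) = 0)"
    using vanish stem_zero[OF f] stem_zero[OF g] by blast
  then have "h (\<alpha> *\<^sub>R u + \<beta> *\<^sub>R I) = 0" if "I \<in> SA u M c" for I
    using induces_eval[OF h z that] by (auto simp: stem_mul_def)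
  then show ?thesis
    using sphere_subset_Omega[OF u J z] unfolding x_eq Vz_def sphere_eq[OF u J] by blast
qed

end

text \<open>A sphere \<alpha> + \<beta> S_A with \<beta> \<noteq> 0 on which A, a, B, b are the values of f\<circ>_s, f'_s, g\<circ>_s, g'_s;
  then h0 and h1 below are those of (f\<cdot>g)\<circ>_s and (f\<cdot>g)'_s.\<close>
locale sphere_product = compatible_alt_star_algebra +
  fixes \<alpha> \<beta> :: real and A a B b :: 'a and f g h :: "'a \<Rightarrow> 'a"
  assumes unit_nonzero: "u \<noteq> 0" and \<beta>_nonzero: "\<beta> \<noteq> 0" and SA_nonempty: "SA u M c \<noteq> {}"
    and f_sphere: "\<And>I. I \<in> SA u M c \<Longrightarrow> f (\<alpha> *\<^sub>R u + \<beta> *\<^sub>R I) = A + \<beta> *\<^sub>R (I \<odot> a)"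
    and g_sphere: "\<And>I. I \<in> SA u M c \<Longrightarrow> g (\<alpha> *\<^sub>R u + \<beta> *\<^sub>R I) = B + \<beta> *\<^sub>R (I \<odot> b)"
    and h_sphere: "\<And>I. I \<in> SA u M c \<Longrightarrow>
      h (\<alpha> *\<^sub>R u + \<beta> *\<^sub>R I) = (A \<odot> B - (\<beta> * \<beta>) *\<^sub>R (a \<odot> b)) + \<beta> *\<^sub>R (I \<odot> (A \<odot> b + a \<odot> B))"
    and a_CA: "a \<in> CA u M c" and b_CA: "b \<in> CA u M c" and prod_CA: "A \<odot> b + a \<odot> B \<in> CA u M c"
begin

abbreviation sph :: "'a set" where "sph \<equiv> {\<alpha> *\<^sub>R u + \<beta> *\<^sub>R I | I. I \<in> SA u M c}"

abbreviation h0 :: 'a where "h0 \<equiv> A \<odot> B - (\<beta> * \<beta>) *\<^sub>R (a \<odot> b)"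

abbreviation h1 :: 'a where "h1 \<equiv> A \<odot> b + a \<odot> B"

lemma sphere_zeroE:
  assumes "y \<in> sph" "k y = 0"
    and k: "\<And>I. I \<in> SA u M c \<Longrightarrow> k (\<alpha> *\<^sub>R u + \<beta> *\<^sub>R I) = C + \<beta> *\<^sub>R (I \<odot> e)"
  obtains I where "I \<in> SA u M c" "y = \<alpha> *\<^sub>R u + \<beta> *\<^sub>R I" "C = - (\<beta> *\<^sub>R (I \<odot> e))"
proof -
  from assms(1) obtain I where I: "I \<in> SA u M c" "y = \<alpha> *\<^sub>R u + \<beta> *\<^sub>R I"
    by blast
  moreover have "C = - (\<beta> *\<^sub>R (I \<odot> e))"
    using assms(2) k[OF I(1)] I(2) by (simp add: add_eq_0_iff2)
  ultimately show ?thesis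
    using that by blast
qed

lemma single_zeroE:
  assumes "{p \<in> sph. k p = 0} = {y}"
    and k: "\<And>I. I \<in> SA u M c \<Longrightarrow> k (\<alpha> *\<^sub>R u + \<beta> *\<^sub>R I) = C + \<beta> *\<^sub>R (I \<odot> e)"
  obtains I where "I \<in> SA u M c" "y = \<alpha> *\<^sub>R u + \<beta> *\<^sub>R I" "C = - (\<beta> *\<^sub>R (I \<odot> e))"
proof -
  have "y \<in> sph" "k y = 0"
    using assms(1) by auto
  then show ?thesis
    using sphere_zeroE[OF _ _ k] that by blast
qed

lemma single_zero_coeff_nonzero:
  assumes single: "{p \<in> sph. k p = 0} = {y}"
    and k: "\<And>I. I \<in> SA u M c \<Longrightarrow> k (\<alpha> *\<^sub>R u + \<beta> *\<^sub>R I) = C + \<beta> *\<^sub>R (I \<odot> e)"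
  shows "e \<noteq> 0"
proof
  assume e: "e = 0"
  obtain I where "I \<in> SA u M c" "y = \<alpha> *\<^sub>R u + \<beta> *\<^sub>R I" "C = - (\<beta> *\<^sub>R (I \<odot> e))"
    by (rule single_zeroE[OF single k])
  then have zeros: "p \<in> sph \<Longrightarrow> k p = 0" for p
    using e k by auto
  obtain J where J: "J \<in> SA u M c"
    using SA_nonempty by blast
  have "\<alpha> *\<^sub>R u + \<beta> *\<^sub>R J \<noteq> \<alpha> *\<^sub>R u + \<beta> *\<^sub>R (- J)"
    using \<beta>_nonzero SA_nonzero[OF unit_nonzero J] by (simp add: eq_neg_iff_add_eq_0 flip: scaleR_2)
  moreover have "\<alpha> *\<^sub>R u + \<beta> *\<^sub>R J \<in> {y}" "\<alpha> *\<^sub>R u + \<beta> *\<^sub>R (- J) \<in> {y}"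
    unfolding single[symmetric] using J SA_uminus[OF J] zeros by blast+
  ultimately show False
    by (metis singletonD)
qed

lemma product_zero_location:
  assumes "h1 \<noteq> 0" "w \<in> sph" "h w = 0"
  shows "w = (\<alpha> *\<^sub>R h1 - h0) \<odot> ainv u M h1"
proof -
  obtain N N' where unit: "norm_unit h1 N N'"
    using CA_norm_unit[OF prod_CA assms(1)] .
  obtain K where K: "K \<in> SA u M c" "w = \<alpha> *\<^sub>R u + \<beta> *\<^sub>R K" "h0 = - (\<beta> *\<^sub>R (K \<odot> h1))"
    using sphere_zeroE[OF assms(2,3) h_sphere] .
  show ?thesis
    unfolding K(2) ainv_norm_unit[OF unit] by (rule sphere_zero_location[OF unit]) (simp add: K(3))
qed

lemma product_coeff_nonzero_left:
  assumes f_single: "{p \<in> sph. f p = 0} = {y}" and g_none: "{p \<in> sph. g p = 0} = {}"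
  shows "h1 \<noteq> 0"
proof
  assume h1_zero: "h1 = 0"
  obtain I1 where I1: "I1 \<in> SA u M c" and A: "A = - (\<beta> *\<^sub>R (I1 \<odot> a))"
    by (rule single_zeroE[OF f_single f_sphere])
  obtain Na Na' where ua: "norm_unit a Na Na'"
    using CA_norm_unit[OF a_CA single_zero_coeff_nonzero[OF f_single f_sphere]] .
  have aB: "a \<odot> B = \<beta> *\<^sub>R ((I1 \<odot> a) \<odot> b)"
    using h1_zero A by (simp add: add_eq_0_iff2)
  \<comment> \<open>then \<alpha> - \<beta>K is a zero of g\<close>
  obtain K where K: "K \<in> SA u M c" "B = \<beta> *\<^sub>R (K \<odot> b)"
  proof (cases "b = 0")
    case True
    then have "B = 0"
      using aB mult_left_cancel[OF ua, of B 0] by simp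
    with True I1 that show ?thesis
      by simp
  next
    case False
    then obtain Nb Nb' where ub: "norm_unit b Nb Nb'"
      using CA_norm_unit[OF b_CA] by blast
    let ?K = "((Na' \<odot> c a) \<odot> ((I1 \<odot> a) \<odot> b)) \<odot> (Nb' \<odot> c b)"
    have "B = \<beta> *\<^sub>R (?K \<odot> b)"
      using inverse_mult_mult[OF ua, of B] aB mult_inverse_mult[OF ub] by simp
    with SA_twist_left[OF ua ub I1] that show ?thesis
      by blast
  qed
  then have "g (\<alpha> *\<^sub>R u + \<beta> *\<^sub>R (- K)) = 0"
    using g_sphere[OF SA_uminus[OF K(1)]] by simp
  then have "\<alpha> *\<^sub>R u + \<beta> *\<^sub>R (- K) \<in> {p \<in> sph. g p = 0}"
    using SA_uminus[OF K(1)] by blast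
  with g_none show False
    by blast
qed

lemma product_coeff_nonzero_right:
  assumes f_none: "{p \<in> sph. f p = 0} = {}" and g_single: "{p \<in> sph. g p = 0} = {z}"
  shows "h1 \<noteq> 0"
proof
  assume h1_zero: "h1 = 0"
  obtain I2 where I2: "I2 \<in> SA u M c" and B: "B = - (\<beta> *\<^sub>R (I2 \<odot> b))"
    by (rule single_zeroE[OF g_single g_sphere])
  obtain Nb Nb' where ub: "norm_unit b Nb Nb'"
    using CA_norm_unit[OF b_CA single_zero_coeff_nonzero[OF g_single g_sphere]] .
  have Ab: "A \<odot> b = \<beta> *\<^sub>R (a \<odot> (I2 \<odot> b))"
    using h1_zero B by (simp add: add_eq_0_iff2)
  obtain K where K: "K \<in> SA u M c" "A = \<beta> *\<^sub>R (K \<odot> a)"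
  proof (cases "a = 0")
    case True
    then have "A = 0"
      using Ab mult_right_cancel[OF ub, of A 0] by simp
    with True I2 that show ?thesis
      by simp
  next
    case False
    then obtain Na Na' where ua: "norm_unit a Na Na'"
      using CA_norm_unit[OF a_CA] by blast
    let ?K = "((a \<odot> (I2 \<odot> b)) \<odot> (Nb' \<odot> c b)) \<odot> (Na' \<odot> c a)"
    have "A = \<beta> *\<^sub>R (?K \<odot> a)"
      using mult_mult_inverse[OF ub, of A] Ab mult_inverse_mult[OF ua] by simp
    with SA_twist_right[OF ua ub I2] that show ?thesis
      by blast
  qed
  then have "f (\<alpha> *\<^sub>R u + \<beta> *\<^sub>R (- K)) = 0"
    using f_sphere[OF SA_uminus[OF K(1)]] by simp
  then have "\<alpha> *\<^sub>R u + \<beta> *\<^sub>R (- K) \<in> {p \<in> sph. f p = 0}"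
    using SA_uminus[OF K(1)] by blast
  with f_none show False
    by blast
qed

lemma product_zeros_single_left:
  assumes f_single: "{p \<in> sph. f p = 0} = {y}" and g_none: "{p \<in> sph. g p = 0} = {}"
  shows "{p \<in> sph. h p = 0}
    \<subseteq> {((y \<odot> a) \<odot> B - (y \<odot> (im c y \<odot> a)) \<odot> b) \<odot> ainv u M (a \<odot> B - (im c y \<odot> a) \<odot> b)}"
proof -
  obtain I1 where I1: "I1 \<in> SA u M c" "y = \<alpha> *\<^sub>R u + \<beta> *\<^sub>R I1" and A: "A = - (\<beta> *\<^sub>R (I1 \<odot> a))"
    by (rule single_zeroE[OF f_single f_sphere])
  have im: "im c y = \<beta> *\<^sub>R I1"
    using im_sphere_point[OF I1(1)] I1(2) by simp
  have den: "a \<odot> B - (im c y \<odot> a) \<odot> b = h1"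
    unfolding im A by simp
  have num: "(y \<odot> a) \<odot> B - (y \<odot> (im c y \<odot> a)) \<odot> b = \<alpha> *\<^sub>R h1 - h0"
    unfolding im unfolding A I1(2) using SA_mult_mult[OF I1(1), of a] by (simp add: algebra_simps)
  show ?thesis
    unfolding den num using product_zero_location[OF product_coeff_nonzero_left[OF assms]] by blast
qed

lemma product_zeros_single_right:
  assumes f_none: "{p \<in> sph. f p = 0} = {}" and g_single: "{p \<in> sph. g p = 0} = {z}"
  shows "{p \<in> sph. h p = 0}
    \<subseteq> {(A \<odot> (z \<odot> b) - a \<odot> (z \<odot> (im c z \<odot> b))) \<odot> ainv u M (A \<odot> b - a \<odot> (im c z \<odot> b))}"
proof -
  obtain I2 where I2: "I2 \<in> SA u M c" "z = \<alpha> *\<^sub>R u + \<beta> *\<^sub>R I2" and B: "B = - (\<beta> *\<^sub>R (I2 \<odot> b))"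
    by (rule single_zeroE[OF g_single g_sphere])
  have im: "im c z = \<beta> *\<^sub>R I2"
    using im_sphere_point[OF I2(1)] I2(2) by simp
  have den: "A \<odot> b - a \<odot> (im c z \<odot> b) = h1"
    unfolding im B by simp
  have num: "A \<odot> (z \<odot> b) - a \<odot> (z \<odot> (im c z \<odot> b)) = \<alpha> *\<^sub>R h1 - h0"
    unfolding im unfolding B I2(2) using SA_mult_mult[OF I2(1), of b] by (simp add: algebra_simps)
  show ?thesis
    unfolding den num using product_zero_location[OF product_coeff_nonzero_right[OF assms]] by blast
qed

lemma product_zeros_both:
  assumes f_single: "{p \<in> sph. f p = 0} = {y}" and g_single: "{p \<in> sph. g p = 0} = {z}"
  shows "h1 = (c y \<odot> a) \<odot> b - a \<odot> (z \<odot> b)"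
    and "h1 = 0 \<Longrightarrow> p \<in> sph \<Longrightarrow> h p = 0"
    and "h1 \<noteq> 0 \<Longrightarrow> {p \<in> sph. h p = 0}
           \<subseteq> {(((\<alpha> * \<alpha> + \<beta> * \<beta>) *\<^sub>R u \<odot> a) \<odot> b - (y \<odot> a) \<odot> (z \<odot> b)) \<odot> ainv u M h1}"
proof -
  obtain I1 where I1: "I1 \<in> SA u M c" "y = \<alpha> *\<^sub>R u + \<beta> *\<^sub>R I1" and A: "A = - (\<beta> *\<^sub>R (I1 \<odot> a))"
    by (rule single_zeroE[OF f_single f_sphere])
  obtain I2 where I2: "I2 \<in> SA u M c" "z = \<alpha> *\<^sub>R u + \<beta> *\<^sub>R I2" and B: "B = - (\<beta> *\<^sub>R (I2 \<odot> b))"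
    by (rule single_zeroE[OF g_single g_sphere])
  have h1_eq: "h1 = - (\<beta> *\<^sub>R ((I1 \<odot> a) \<odot> b + a \<odot> (I2 \<odot> b)))"
    unfolding A B by (simp add: algebra_simps)
  show "h1 = (c y \<odot> a) \<odot> b - a \<odot> (z \<odot> b)"
    unfolding h1_eq I1(2) I2(2) conj_sphere_point[OF I1(1)] by (simp add: algebra_simps)
  show "h p = 0" if "h1 = 0" "p \<in> sph"
  proof -
    have sum_zero: "(I1 \<odot> a) \<odot> b = - (a \<odot> (I2 \<odot> b))"
      using that(1) \<beta>_nonzero unfolding h1_eq by (simp add: add_eq_0_iff2)
    have "(I1 \<odot> a) \<odot> (I2 \<odot> b) = a \<odot> b"
    proof (cases "b = 0")
      case False
      then obtain Nb Nb' where "norm_unit b Nb Nb'"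
        using CA_norm_unit[OF b_CA] by blast
      then show ?thesis
        using SA_twisted_product[OF _ I1(1) I2(1) sum_zero] by blast
    qed simp
    then have "h0 = 0"
      unfolding A B by (simp add: algebra_simps)
    with that show ?thesis
      using h_sphere by auto
  qed
  show "{p \<in> sph. h p = 0}
      \<subseteq> {(((\<alpha> * \<alpha> + \<beta> * \<beta>) *\<^sub>R u \<odot> a) \<odot> b - (y \<odot> a) \<odot> (z \<odot> b)) \<odot> ainv u M h1}"
    if "h1 \<noteq> 0"
  proof -
    have num: "((\<alpha> * \<alpha> + \<beta> * \<beta>) *\<^sub>R u \<odot> a) \<odot> b - (y \<odot> a) \<odot> (z \<odot> b) = \<alpha> *\<^sub>R h1 - h0"
      unfolding h1_eq I1(2) I2(2) A B by (simp add: algebra_simps)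
    show ?thesis
      unfolding num using product_zero_location[OF that] by blast
  qed
qed

end

context compatible_alt_star_algebra
begin

lemma nonreal_point_sphere_product:
  assumes u: "u \<noteq> 0" and SA_ne: "SA u M c \<noteq> {}" and D_cnj: "\<forall>z\<in>D. cnj z \<in> D"
    and F: "stem D F" and G: "stem D G"
    and f: "induces u M c D F f" and g: "induces u M c D G g" and h: "induces u M c D (stem_mul M F G) h"
    and x: "x \<in> Omega u M c D - realA u"
    and CA: "sph_der u M c f x \<in> CA u M c" "sph_der u M c g x \<in> CA u M c" "sph_der u M c h x \<in> CA u M c"
  obtains \<alpha> \<beta> where
    "sphere_product u M c \<alpha> \<beta> (sph_val c f x) (sph_der u M c f x) (sph_val c g x) (sph_der u M c g x) f g h"
    "sphere u M c x = {\<alpha> *\<^sub>R u + \<beta> *\<^sub>R I | I. I \<in> SA u M c}" "sphere u M c x \<subseteq> Omega u M c D"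
    "nm M c x = (\<alpha> * \<alpha> + \<beta> * \<beta>) *\<^sub>R u"
    "sph_der u M c h x = sph_val c f x \<odot> sph_der u M c g x + sph_der u M c f x \<odot> sph_val c g x"
proof -
  obtain \<alpha> \<beta> J where x_eq: "x = \<alpha> *\<^sub>R u + \<beta> *\<^sub>R J" and z: "Complex \<alpha> \<beta> \<in> D" and J: "J \<in> SA u M c"
    using x by (auto elim: OmegaE)
  have \<beta>: "\<beta> \<noteq> 0"
    using x x_eq by (auto simp: realA_def)
  have z_cnj: "Complex \<alpha> (- \<beta>) \<in> D"
    using D_cnj z by (metis complex_cnj)
  let ?z = "Complex \<alpha> \<beta>"
  have fst_eq: "fst (F ?z) = sph_val c f x" "fst (G ?z) = sph_val c g x"
    using sph_val_eval[OF F f z z_cnj J] sph_val_eval[OF G g z z_cnj J] x_eq by simp_all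
  have snd_eq: "snd (F ?z) = \<beta> *\<^sub>R sph_der u M c f x" "snd (G ?z) = \<beta> *\<^sub>R sph_der u M c g x"
    using sph_der_eval[OF F f z z_cnj J \<beta>] sph_der_eval[OF G g z z_cnj J \<beta>] x_eq \<beta> by simp_all
  have "sph_der u M c h x = sph_val c f x \<odot> sph_der u M c g x + sph_der u M c f x \<odot> sph_val c g x"
    using sph_der_eval[OF stem_stem_mul[OF F G] h z z_cnj J \<beta>] x_eq \<beta>
    by (simp add: stem_mul_def fst_eq snd_eq scaleR_add_right[symmetric])
  moreover have "sphere_product u M c \<alpha> \<beta>
      (sph_val c f x) (sph_der u M c f x) (sph_val c g x) (sph_der u M c g x) f g h"
    using u \<beta> SA_ne CA calculation induces_eval[OF f z] induces_eval[OF g z] induces_eval[OF h z]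
    by unfold_locales (simp_all add: fst_eq snd_eq stem_mul_def algebra_simps)
  ultimately show ?thesis
    using that sphere_eq[OF u J] sphere_subset_Omega[OF u J z] nm_sphere_point[OF J] x_eq by blast
qed

lemma product_zeros_nonreal:
  assumes u: "u \<noteq> 0" and SA_ne: "SA u M c \<noteq> {}" and D_cnj: "\<forall>z\<in>D. cnj z \<in> D"
    and F: "stem D F" and G: "stem D G"
    and f: "induces u M c D F f" and g: "induces u M c D G g" and h: "induces u M c D (stem_mul M F G) h"
    and x: "x \<in> Omega u M c D - realA u"
  defines "S \<equiv> sphere u M c x"
    and "Vf \<equiv> Vz u M c D f" and "Vg \<equiv> Vz u M c D g" and "Vh \<equiv> Vz u M c D h"
    and "f0 \<equiv> sph_val c f x" and "g0 \<equiv> sph_val c g x"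
    and "f1 \<equiv> sph_der u M c f x" and "g1 \<equiv> sph_der u M c g x" and "h1 \<equiv> sph_der u M c h x"
  assumes CA: "f1 \<in> CA u M c" "g1 \<in> CA u M c" "h1 \<in> CA u M c"
  shows "S \<inter> Vf = {y} \<Longrightarrow> S \<inter> Vg = {} \<Longrightarrow>
      S \<inter> Vh \<subseteq> {((y \<odot> f1) \<odot> g0 - (y \<odot> (im c y \<odot> f1)) \<odot> g1) \<odot> ainv u M (f1 \<odot> g0 - (im c y \<odot> f1) \<odot> g1)}"
    and "S \<inter> Vf = {} \<Longrightarrow> S \<inter> Vg = {z} \<Longrightarrow>
      S \<inter> Vh \<subseteq> {(f0 \<odot> (z \<odot> g1) - f1 \<odot> (z \<odot> (im c z \<odot> g1))) \<odot> ainv u M (f0 \<odot> g1 - f1 \<odot> (im c z \<odot> g1))}"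
    and "S \<inter> Vf = {y} \<Longrightarrow> S \<inter> Vg = {z} \<Longrightarrow> h1 = (c y \<odot> f1) \<odot> g1 - f1 \<odot> (z \<odot> g1)"
    and "S \<inter> Vf = {y} \<Longrightarrow> S \<inter> Vg = {z} \<Longrightarrow> h1 = 0 \<Longrightarrow> S \<subseteq> Vh"
    and "S \<inter> Vf = {y} \<Longrightarrow> S \<inter> Vg = {z} \<Longrightarrow> h1 \<noteq> 0 \<Longrightarrow>
      S \<inter> Vh \<subseteq> {((nm M c x \<odot> f1) \<odot> g1 - (y \<odot> f1) \<odot> (z \<odot> g1)) \<odot> ainv u M h1}"
proof -
  obtain \<alpha> \<beta> where P: "sphere_product u M c \<alpha> \<beta> f0 f1 g0 g1 f g h"
    and S: "S = {\<alpha> *\<^sub>R u + \<beta> *\<^sub>R I | I. I \<in> SA u M c}" "S \<subseteq> Omega u M c D"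
    and nm: "nm M c x = (\<alpha> * \<alpha> + \<beta> * \<beta>) *\<^sub>R u" and h1_eq: "h1 = f0 \<odot> g1 + f1 \<odot> g0"
    using nonreal_point_sphere_product[OF u SA_ne D_cnj F G f g h x] CA
    unfolding S_def f0_def g0_def f1_def g1_def h1_def by blast
  interpret P: sphere_product u M c \<alpha> \<beta> f0 f1 g0 g1 f g h
    by (rule P)
  have zeros: "S \<inter> Vz u M c D k = {p \<in> P.sph. k p = 0}" for k
    using S by (auto simp: Vz_def)
  show "S \<inter> Vf = {y} \<Longrightarrow> S \<inter> Vg = {} \<Longrightarrow>
      S \<inter> Vh \<subseteq> {((y \<odot> f1) \<odot> g0 - (y \<odot> (im c y \<odot> f1)) \<odot> g1) \<odot> ainv u M (f1 \<odot> g0 - (im c y \<odot> f1) \<odot> g1)}"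
    unfolding Vf_def Vg_def Vh_def zeros by (rule P.product_zeros_single_left)
  show "S \<inter> Vf = {} \<Longrightarrow> S \<inter> Vg = {z} \<Longrightarrow>
      S \<inter> Vh \<subseteq> {(f0 \<odot> (z \<odot> g1) - f1 \<odot> (z \<odot> (im c z \<odot> g1))) \<odot> ainv u M (f0 \<odot> g1 - f1 \<odot> (im c z \<odot> g1))}"
    unfolding Vf_def Vg_def Vh_def zeros by (rule P.product_zeros_single_right)
  assume two: "S \<inter> Vf = {y}" "S \<inter> Vg = {z}"
  note P_two = P.product_zeros_both[OF two[unfolded Vf_def Vg_def zeros]]
  show "h1 = (c y \<odot> f1) \<odot> g1 - f1 \<odot> (z \<odot> g1)"
    unfolding h1_eq by (rule P_two(1))
  show "h1 = 0 \<Longrightarrow> S \<subseteq> Vh"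
    using P_two(2) S unfolding h1_eq Vh_def Vz_def by blast
  show "h1 \<noteq> 0 \<Longrightarrow> S \<inter> Vh \<subseteq> {((nm M c x \<odot> f1) \<odot> g1 - (y \<odot> f1) \<odot> (z \<odot> g1)) \<odot> ainv u M h1}"
    unfolding Vh_def zeros nm h1_eq by (rule P_two(3))
qed

end

theorem theorem5p5:
  fixes u :: "'a::euclidean_space" and M :: "'a \<Rightarrow> 'a \<Rightarrow> 'a" and c :: "'a \<Rightarrow> 'a"
    and D :: "complex set" and F G :: "complex \<Rightarrow> 'a \<times> 'a" and f g h :: "'a \<Rightarrow> 'a"
  assumes alg: "alt_star_algebra u M c"
    and comp: "compatible M c"
    and SA_ne: "SA u M c \<noteq> {}"
    and D_ne: "D \<noteq> {}"
    and D_cnj: "\<forall>z\<in>D. cnj z \<in> D"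
    and F: "stem D F" and G: "stem D G"
    and f: "induces u M c D F f" and g: "induces u M c D G g"
    and h: "induces u M c D (stem_mul M F G) h"
  shows "(\<forall>x \<in> Omega u M c D \<inter> realA u.
            x \<in> Vz u M c D f \<union> Vz u M c D g \<longrightarrow> x \<in> Vz u M c D h)
       \<and> (\<forall>x \<in> Omega u M c D.
            sphere u M c x \<subseteq> Vz u M c D f \<or> sphere u M c x \<subseteq> Vz u M c D g
              \<longrightarrow> sphere u M c x \<subseteq> Vz u M c D h)
       \<and> (\<forall>x \<in> Omega u M c D - realA u.
            (let S = sphere u M c x; Vf = Vz u M c D f; Vg = Vz u M c D g; Vh = Vz u M c D h;
                 f0 = sph_val c f x; g0 = sph_val c g x;
                 fd = sph_der u M c f x; gd = sph_der u M c g x; hd = sph_der u M c h x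
             in fd \<in> CA u M c \<and> gd \<in> CA u M c \<and> hd \<in> CA u M c \<longrightarrow>
               (\<forall>y. S \<inter> Vf = {y} \<and> S \<inter> Vg = {} \<longrightarrow>
                  S \<inter> Vh \<subseteq> {M (M (M y fd) g0 - M (M y (M (im c y) fd)) gd)
                                (ainv u M (M fd g0 - M (M (im c y) fd) gd))})
             \<and> (\<forall>z. S \<inter> Vf = {} \<and> S \<inter> Vg = {z} \<longrightarrow>
                  S \<inter> Vh \<subseteq> {M (M f0 (M z gd) - M fd (M z (M (im c z) gd)))
                                (ainv u M (M f0 gd - M fd (M (im c z) gd)))})
             \<and> (\<forall>y z. S \<inter> Vf = {y} \<and> S \<inter> Vg = {z} \<longrightarrow>
                  hd = M (M (c y) fd) gd - M fd (M z gd)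
                  \<and> (hd = 0 \<longrightarrow> S \<subseteq> Vh)
                  \<and> (hd \<noteq> 0 \<longrightarrow>
                       S \<inter> Vh \<subseteq> {M (M (M (nm M c x) fd) gd - M (M y fd) (M z gd)) (ainv u M hd)}))))"
proof -
  interpret compatible_alt_star_algebra u M c
    using alg comp by unfold_locales
  show ?thesis
  proof (cases "u = 0")
    case True
    then have trivial: "\<And>y :: 'a. y = 0"
      by (rule unit_zero_trivial)
    then have "Omega u M c D - realA u = {}" and "Vz u M c D h = Omega u M c D"
      by (auto simp: realA_def Vz_def)
    moreover have "sphere u M c x \<subseteq> Omega u M c D" if "x \<in> Omega u M c D" for x
      using that trivial by (metis subsetI)
    ultimately show ?thesis
      by auto
  next
    case False
    show ?thesis
      unfolding Let_def
      by (intro conjI ballI impI allI; (elim conjE)?;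
          rule product_zero_at_real_point[OF False F G f g h] product_vanishes_on_sphere[OF False f g h]
            product_zeros_nonreal[OF False SA_ne D_cnj F G f g h]; assumption)
  qed
qed

end
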